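(* Let $m,d,s$ be positive integers and $q$ a prime power with $d/m<q-1$. Then the multiplicity code $\mathcal{C}(m,d,s,q)$ is a $k$-PIR code $[q^s,n,k]_Q^P$, where $n=\binom{d+s}{s}/\binom{s+m-1}{s}$, $k=\lfloor q/m\rfloor^{s-1}$, and $Q=q^{\binom{s+m-1}{s}}$.
   Context: For $\boldsymbol{i}=(i_1,\dots,i_s)$ a vector of nonnegative integers, $wt(\boldsymbol{i})=\sum_j i_j$. For $P\in\mathbb{F}_q[x_1,\dots,x_s]$, the $\boldsymbol{i}$-th Hasse derivative $P^{(\boldsymbol{i})}(\boldsymbol{x})$ is the coefficient of $\boldsymbol{z}^{\boldsymbol{i}}$ in $P(\boldsymbol{x}+\boldsymbol{z})$. Let $\Sigma=\mathbb{F}_q^{\binom{s+m-1}{s}}$ and $P^{(<m)}(\boldsymbol{w})=(P^{(\boldsymbol{i})}(\boldsymbol{w}))_{wt(\boldsymbol{i})<m}\in\Sigma$. The multiplicity code $\mathcal{C}(m,d,s,q)$ is the $\mathbb{F}_q$-linear code of length $q^s$ over the alphabet $\Sigma$ (of size $Q$), coordinates indexed by $\mathbb{F}_q^s$, consisting of $(P^{(<m)}(\boldsymbol{w}))_{\boldsymbol{w}\in\mathbb{F}_q^s}$ for all $P$ of total degree at most $d$; it is taken in systematic form, so that it encodes $n=\log_Q|\mathcal{C}|$ information symbols. An $[N,n,k]_Q^P$ code ($k$-PIR code) is a code of length $N$ over an alphabet of size $Q$ encoding $n$ information symbols such that for every information symbol $x_i$ there exist $k$ mutually disjoint sets $R_{i,1},\dots,R_{i,k}$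 of coordinates such that, for each $j$, $x_i$ is a function of the codeword symbols in $R_{i,j}$. *)

theory Defs
  imports Complex_Main "HOL-Library.FuncSet" "HOL-Library.Cardinality"
begin

text \<open>Points of F_q^s: functions nat => 'a vanishing outside {..<s}.\<close>
definition pts :: "nat \<Rightarrow> (nat \<Rightarrow> 'a::zero) set" where
  "pts s = {x. \<forall>j\<ge>s. x j = 0}"

definition mons :: "nat \<Rightarrow> nat \<Rightarrow> (nat \<Rightarrow> nat) set" where
  "mons s t = {e. (\<forall>j\<ge>s. e j = 0) \<and> (\<Sum>j<s. e j) < t}"

text \<open>Polynomials in s variables of total degree at most d, as coefficient functions.\<close>
definition polys :: "nat \<Rightarrow> nat \<Rightarrow> ((nat \<Rightarrow> nat) \<Rightarrow> 'a::zero) set" where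
  "polys s d = {c. \<forall>e. e \<notin> mons s (Suc d) \<longrightarrow> c e = 0}"

text \<open>The i-th Hasse derivative of P = sum_e c e x^e, evaluated at x: the coefficient
  of z^i in P(x+z), i.e. sum_e c e * prod_j (e_j choose i_j) x_j^(e_j - i_j).\<close>
definition hasse :: "nat \<Rightarrow> nat \<Rightarrow> ((nat \<Rightarrow> nat) \<Rightarrow> 'a::comm_ring_1)
    \<Rightarrow> (nat \<Rightarrow> nat) \<Rightarrow> (nat \<Rightarrow> 'a) \<Rightarrow> 'a" where
  "hasse s d c i x = (\<Sum>e\<in>mons s (Suc d). c e *
      (\<Prod>j<s. of_nat (e j choose i j) * x j ^ (e j - i j)))"

text \<open>Alphabet Sigma = F_q^{binom(s+m-1,s)}, indexed by multi-indices of weight < m.\<close>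
definition alphabet :: "nat \<Rightarrow> nat \<Rightarrow> ((nat \<Rightarrow> nat) \<Rightarrow> 'a) set" where
  "alphabet s m = PiE (mons s m) (\<lambda>_. UNIV)"

definition mult_codeword :: "nat \<Rightarrow> nat \<Rightarrow> nat \<Rightarrow> ((nat \<Rightarrow> nat) \<Rightarrow> 'a::comm_ring_1)
    \<Rightarrow> (nat \<Rightarrow> 'a) \<Rightarrow> ((nat \<Rightarrow> nat) \<Rightarrow> 'a)" where
  "mult_codeword m d s c = (\<lambda>w\<in>pts s. \<lambda>i\<in>mons s m. hasse s d c i w)"

text \<open>The multiplicity code C(m,d,s,q), q = CARD('a).\<close>
definition mult_code :: "nat \<Rightarrow> nat \<Rightarrow> nat \<Rightarrow>
    ((nat \<Rightarrow> 'a::{finite,field}) \<Rightarrow> ((nat \<Rightarrow> nat) \<Rightarrow> 'a)) set" where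
  "mult_code m d s = mult_codeword m d s ` polys s d"

text \<open>k-PIR property for a code with coordinate set I: every coordinate symbol is
  a function of the codeword symbols on each of k mutually disjoint sets of coordinates.\<close>
definition pir_recoverable :: "'i set \<Rightarrow> ('i \<Rightarrow> 'b) set \<Rightarrow> nat \<Rightarrow> 'i \<Rightarrow> bool" where
  "pir_recoverable I C k w \<longleftrightarrow>
     (\<exists>R :: nat \<Rightarrow> 'i set.
        (\<forall>j<k. R j \<subseteq> I) \<and>
        (\<forall>j<k. \<forall>j'<k. j \<noteq> j' \<longrightarrow> R j \<inter> R j' = {}) \<and>
        (\<forall>j<k. \<forall>c1\<in>C. \<forall>c2\<in>C. (\<forall>y\<in>R j. c1 y = c2 y) \<longrightarrow> c1 w = c2 w))"

end

theory Submission
  imports Defs "HOL-Computational_Algebra.Polynomial"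
begin

text \<open>
  The encoding is injective because a nonzero polynomial of degree \<open>d < m q\<close> cannot vanish to
  order \<open>m\<close> on all of \<open>F\<^sub>q\<^sup>s\<close> (the multiplicity Schwartz--Zippel lemma on a product grid,
  proved by induction on the number of variables, peeling off the top power of the last one).

  For local recovery at \<open>w\<close>, split \<open>F\<^sub>q\<close> into \<open>\<lfloor>q/m\<rfloor>\<close> disjoint blocks of size \<open>m\<close> and use
  the lines \<open>w + T (v, 1)\<close>, \<open>T \<noteq> 0\<close>, with \<open>v\<close> ranging over a product of \<open>s - 1\<close> blocks. If
  the derivatives of \<open>P\<close> of order \<open>< m\<close> vanish on these points, then \<open>P(w + T (v, 1))\<close> has
  \<open>q - 1\<close> roots of multiplicity \<open>m\<close> and degree \<open>d < m (q - 1)\<close>, so it is zero; hence each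
  weight-\<open>b\<close> Taylor term of \<open>P\<close> at \<open>w\<close>, a polynomial of degree \<open>b < m\<close> in \<open>v\<close>, vanishes on the
  grid and therefore identically. Different products of blocks give disjoint sets of points,
  since the directions are normalised to last coordinate \<open>1\<close>.
\<close>

section \<open>Counting monomials and points\<close>

definition box :: "nat \<Rightarrow> (nat \<Rightarrow> nat) \<Rightarrow> (nat \<Rightarrow> nat) set" where
  "box s e = {a. (\<forall>j\<ge>s. a j = 0) \<and> (\<forall>j<s. a j \<le> e j)}"

lemma box_0: "box 0 e = {\<lambda>_. 0}"
  by (auto simp: box_def)

lemma box_Suc: "box (Suc s) e = (\<lambda>(a, k). a(s := k)) ` (box s e \<times> {..e s})"
proof (intro equalityI subsetI)
  fix a assume a: "a \<in> box (Suc s) e"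
  then have "(a(s := 0), a s) \<in> box s e \<times> {..e s}"
    by (auto simp: box_def)
  then show "a \<in> (\<lambda>(a, k). a(s := k)) ` (box s e \<times> {..e s})"
    by (intro image_eqI[where x = "(a(s := 0), a s)"]) auto
qed (auto simp: box_def less_Suc_eq)

lemma inj_on_box_Suc: "inj_on (\<lambda>(a, k). a(s := k)) (box s e \<times> {..e s})"
  by (auto simp: inj_on_def box_def fun_eq_iff)

lemma finite_box: "finite (box s e)"
  by (induction s) (auto simp: box_0 box_Suc)

lemma prod_sum_eq_sum_box:
  fixes f :: "nat \<Rightarrow> nat \<Rightarrow> 'a::comm_semiring_1"
  shows "(\<Prod>j<s. \<Sum>k\<le>e j. f j k) = (\<Sum>a\<in>box s e. \<Prod>j<s. f j (a j))"
proof (induction s)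
  case 0
  then show ?case by (simp add: box_0)
next
  case (Suc s)
  have "(\<Prod>j<Suc s. \<Sum>k\<le>e j. f j k) = (\<Sum>a\<in>box s e. \<Prod>j<s. f j (a j)) * (\<Sum>k\<le>e s. f s k)"
    using Suc by simp
  also have "\<dots> = (\<Sum>(a, k)\<in>box s e \<times> {..e s}. \<Prod>j<Suc s. f j ((a(s := k)) j))"
    by (simp add: sum_product sum.cartesian_product)
  also have "\<dots> = (\<Sum>a\<in>box (Suc s) e. \<Prod>j<Suc s. f j (a j))"
    unfolding box_Suc
    using sum.reindex[OF inj_on_box_Suc, of "\<lambda>a. \<Prod>j<Suc s. f j (a j)" s e]
    by (simp add: case_prod_beta)
  finally show ?case .
qed

lemma card_supported_functions:
  assumes "finite A"
  shows "card {f :: 'b \<Rightarrow> 'a::{finite,zero}. \<forall>x. x \<notin> A \<longrightarrow> f x = 0} = CARD('a) ^ card A"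
proof -
  have "bij_betw (\<lambda>f. restrict f A) {f :: 'b \<Rightarrow> 'a. \<forall>x. x \<notin> A \<longrightarrow> f x = 0} (A \<rightarrow>\<^sub>E UNIV)"
    by (rule bij_betwI[where g = "\<lambda>f x. if x \<in> A then f x else 0"])
      (auto simp: fun_eq_iff PiE_def extensional_def)
  then show ?thesis
    using assms by (simp add: bij_betw_same_card card_PiE)
qed

lemma card_pts: "card (pts s :: (nat \<Rightarrow> 'a::{finite,zero}) set) = CARD('a) ^ s"
proof -
  have "pts s = {x :: nat \<Rightarrow> 'a. \<forall>j. j \<notin> {..<s} \<longrightarrow> x j = 0}"
    by (auto simp: pts_def)
  then show ?thesis
    by (simp add: card_supported_functions del: lessThan_iff)
qed

lemma weight_fun_upd: "(\<Sum>j<Suc s. (e(s := k)) j) = (\<Sum>j<s. e j) + k"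
  by simp

lemma mons_subset_box: "mons s t \<subseteq> box s (\<lambda>_. t)"
proof
  fix a assume a: "a \<in> mons s t"
  have "a j \<le> (\<Sum>j<s. a j)" if "j < s" for j
    using that by (intro member_le_sum) auto
  then show "a \<in> box s (\<lambda>_. t)"
    using a by (force simp: mons_def box_def)
qed

lemma finite_mons: "finite (mons s t)"
  using mons_subset_box finite_box by (rule finite_subset)

lemma mons_0: "mons 0 t = (if t > 0 then {\<lambda>_. 0} else {})"
  by (auto simp: mons_def)

lemma mons_Suc: "mons (Suc s) t = (\<lambda>(k, a). a(s := k)) ` (SIGMA k:{..<t}. mons s (t - k))"
proof (intro equalityI subsetI)
  fix a assume a: "a \<in> mons (Suc s) t"
  then have "(a s, a(s := 0)) \<in> (SIGMA k:{..<t}. mons s (t - k))"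
    by (auto simp: mons_def)
  then show "a \<in> (\<lambda>(k, a). a(s := k)) ` (SIGMA k:{..<t}. mons s (t - k))"
    by (intro image_eqI[where x = "(a s, a(s := 0))"]) auto
qed (auto simp: mons_def)

lemma inj_on_mons_Suc: "inj_on (\<lambda>(k, a). a(s := k)) (SIGMA k:{..<t}. mons s (t - k))"
  by (auto simp: inj_on_def mons_def fun_eq_iff)

lemma card_mons: "card (mons s (Suc T)) = s + T choose s"
proof (induction s arbitrary: T)
  case 0
  then show ?case by (simp add: mons_0)
next
  case (Suc s)
  have "card (mons (Suc s) (Suc T)) = (\<Sum>k<Suc T. card (mons s (Suc T - k)))"
    unfolding mons_Suc by (simp add: card_image[OF inj_on_mons_Suc] finite_mons)
  also have "\<dots> = (\<Sum>k<Suc T. s + (T - k) choose s)"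
    using Suc by (intro sum.cong) (auto simp: Suc_diff_le)
  also have "\<dots> = (\<Sum>k\<le>T. s + k choose k)"
    using sum.nat_diff_reindex[of "\<lambda>k. s + k choose s" "Suc T"]
    by (simp add: binomial_symmetric[of s "s + _"] lessThan_Suc_atMost)
  also have "\<dots> = Suc s + T choose Suc s"
    using binomial_symmetric[of T "Suc s + T"] by (simp add: sum_choose_lower)
  finally show ?case .
qed

section \<open>Hasse derivatives\<close>

lemma hasse_taylor:
  fixes c :: "(nat \<Rightarrow> nat) \<Rightarrow> 'a::comm_ring_1"
  shows "(\<Sum>e\<in>mons s (Suc D). c e * (\<Prod>j<s. (x j + y j) ^ e j))
       = (\<Sum>a\<in>mons s (Suc D). hasse s D c a x * (\<Prod>j<s. y j ^ a j))"
proof -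
  define G where "G e a = (\<Prod>j<s. of_nat (e j choose a j) * x j ^ (e j - a j) * y j ^ a j)" for e a
  have "(x j + y j) ^ n = (\<Sum>k\<le>n. of_nat (n choose k) * x j ^ (n - k) * y j ^ k)" for j n
    using binomial_ring[of "y j" "x j" n] by (simp add: add.commute mult_ac)
  then have binomial: "(\<Prod>j<s. (x j + y j) ^ e j) = (\<Sum>a\<in>box s e. G e a)" for e
    unfolding G_def by (simp add: prod_sum_eq_sum_box)
  have hasse: "hasse s D c a x * (\<Prod>j<s. y j ^ a j) = (\<Sum>e\<in>mons s (Suc D). c e * G e a)" for a
    unfolding hasse_def G_def sum_distrib_right
    by (intro sum.cong refl) (simp add: prod.distrib mult_ac)
  have box: "(\<Sum>a\<in>mons s (Suc D). G e a) = (\<Sum>a\<in>box s e. G e a)" if e: "e \<in> mons s (Suc D)" for e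
  proof (rule sum.mono_neutral_right[OF finite_mons])
    show "box s e \<subseteq> mons s (Suc D)"
      using e by (auto simp: box_def mons_def intro: le_less_trans[OF sum_mono])
    show "\<forall>a\<in>mons s (Suc D) - box s e. G e a = 0"
    proof
      fix a assume "a \<in> mons s (Suc D) - box s e"
      then obtain j where "j < s" "e j < a j"
        by (auto simp: box_def mons_def not_le)
      then show "G e a = 0"
        unfolding G_def by (intro prod_zero) (auto intro!: bexI[of _ j] simp: binomial_eq_0)
    qed
  qed
  have "(\<Sum>a\<in>mons s (Suc D). hasse s D c a x * (\<Prod>j<s. y j ^ a j))
      = (\<Sum>a\<in>mons s (Suc D). \<Sum>e\<in>mons s (Suc D). c e * G e a)"
    by (simp add: hasse)
  also have "\<dots> = (\<Sum>e\<in>mons s (Suc D). c e * (\<Sum>a\<in>mons s (Suc D). G e a))"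
    by (subst sum.swap) (simp add: sum_distrib_left)
  also have "\<dots> = (\<Sum>e\<in>mons s (Suc D). c e * (\<Prod>j<s. (x j + y j) ^ e j))"
    by (intro sum.cong refl) (simp add: box binomial)
  finally show ?thesis by simp
qed

lemma hasse_degree_mono:
  assumes "\<forall>e. e \<notin> mons s (Suc D1) \<longrightarrow> c e = 0" and "D1 \<le> D2"
  shows "hasse s D1 c i x = hasse s D2 c i x"
  unfolding hasse_def
  by (rule sum.mono_neutral_left[OF finite_mons]) (use assms in \<open>auto simp: mons_def\<close>)

lemma hasse_diff: "hasse s D (\<lambda>e. c1 e - c2 e) i x = hasse s D c1 i x - hasse s D c2 i x"
  unfolding hasse_def by (simp add: sum_subtractf[symmetric] left_diff_distrib)

lemma hasse_zero [simp]: "hasse s D (\<lambda>_. 0) i x = 0"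
  by (simp add: hasse_def)

lemma hasse_eq_0_if_weight_gt:
  assumes "D < (\<Sum>j<s. a j)"
  shows "hasse s D c a x = 0"
  unfolding hasse_def
proof (rule sum.neutral, rule ballI)
  fix e assume e: "e \<in> mons s (Suc D)"
  obtain j where j: "j < s" "e j < a j"
  proof (rule ccontr)
    assume "\<not> thesis"
    then have "(\<Sum>j<s. a j) \<le> (\<Sum>j<s. e j)"
      by (intro sum_mono) (meson not_less lessThan_iff that)
    then show False using e assms by (auto simp: mons_def)
  qed
  then have "(\<Prod>j<s. of_nat (e j choose a j) * x j ^ (e j - a j)) = 0"
    by (intro prod_zero) (auto intro!: bexI[of _ j] simp: binomial_eq_0)
  then show "c e * (\<Prod>j<s. of_nat (e j choose a j) * x j ^ (e j - a j)) = 0"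
    by simp
qed

text \<open>The coefficient of \<open>x\<^sub>s\<^sup>k\<close>, viewing a polynomial in \<open>x\<^sub>0, \<dots>, x\<^sub>s\<close> as one in \<open>x\<^sub>s\<close>
  over \<open>F[x\<^sub>0, \<dots>, x\<^sub>s\<^sub>-\<^sub>1]\<close>.\<close>

definition coeff_var :: "((nat \<Rightarrow> nat) \<Rightarrow> 'a::zero) \<Rightarrow> nat \<Rightarrow> nat \<Rightarrow> (nat \<Rightarrow> nat) \<Rightarrow> 'a" where
  "coeff_var c s k = (\<lambda>e. if e s = 0 then c (e(s := k)) else 0)"

lemma coeff_var_support:
  assumes "\<forall>e. e \<notin> mons (Suc s) (Suc D) \<longrightarrow> c e = 0"
  shows "\<forall>e. e \<notin> mons s (Suc (D - k)) \<longrightarrow> coeff_var c s k e = 0"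
proof (intro allI impI)
  fix e assume e: "e \<notin> mons s (Suc (D - k))"
  show "coeff_var c s k e = 0"
  proof (rule ccontr)
    assume "coeff_var c s k e \<noteq> 0"
    then have es: "e s = 0" and "c (e(s := k)) \<noteq> 0"
      by (auto simp: coeff_var_def split: if_splits)
    then have m: "e(s := k) \<in> mons (Suc s) (Suc D)"
      using assms by blast
    then have "(\<Sum>j<s. e j) < Suc (D - k)"
      by (auto simp: mons_def)
    moreover have "\<forall>j\<ge>s. e j = 0"
      using m es by (auto simp: mons_def) (metis Suc_leI le_neq_implies_less)
    ultimately show False
      using e by (simp add: mons_def)
  qed
qed

lemma ex_top_coeff_var:
  assumes supp: "\<forall>e. e \<notin> mons (Suc s) (Suc D) \<longrightarrow> c e = 0" and "c \<noteq> (\<lambda>_. 0)"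
  shows "\<exists>t\<le>D. coeff_var c s t \<noteq> (\<lambda>_. 0) \<and> (\<forall>k>t. coeff_var c s k = (\<lambda>_. 0))"
proof -
  define E where "E = {e. c e \<noteq> 0}"
  have E: "E \<subseteq> mons (Suc s) (Suc D)"
    using supp by (auto simp: E_def)
  then have "finite E"
    using finite_mons finite_subset by blast
  define t where "t = Max ((\<lambda>e. e s) ` E)"
  have "E \<noteq> {}"
    using \<open>c \<noteq> (\<lambda>_. 0)\<close> by (auto simp: E_def fun_eq_iff)
  then have "t \<in> (\<lambda>e. e s) ` E"
    unfolding t_def using \<open>finite E\<close> by (intro Max_in) auto
  then obtain e0 where e0: "e0 \<in> E" "e0 s = t"
    by auto
  have t_max: "e s \<le> t" if "e \<in> E" for e
    unfolding t_def using \<open>finite E\<close> that by auto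
  have "e0 s \<le> (\<Sum>j<Suc s. e0 j)"
    by (rule member_le_sum) auto
  then have "t \<le> D"
    using E e0 by (auto simp: mons_def)
  moreover have "coeff_var c s t (e0(s := 0)) \<noteq> 0"
    using e0 by (auto simp: E_def coeff_var_def fun_upd_idem)
  moreover have "\<forall>k>t. coeff_var c s k = (\<lambda>_. 0)"
  proof (intro allI impI ext)
    fix k e assume "t < k"
    then have "e(s := k) \<notin> E"
      using t_max[of "e(s := k)"] by auto
    then show "coeff_var c s k e = 0"
      by (simp add: coeff_var_def E_def)
  qed
  ultimately show ?thesis
    by fastforce
qed

lemma hasse_Suc_fun_upd:
  fixes c :: "(nat \<Rightarrow> nat) \<Rightarrow> 'a::comm_ring_1"
  assumes supp: "\<forall>e. e \<notin> mons (Suc s) (Suc D) \<longrightarrow> c e = 0"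
  shows "hasse (Suc s) D c (a(s := b)) (w(s := y))
       = (\<Sum>k\<le>D. hasse s D (coeff_var c s k) a w * (of_nat (k choose b) * y ^ (k - b)))"
proof -
  define F where "F e = (\<Prod>j<s. of_nat (e j choose a j) * w j ^ (e j - a j))" for e
  define Y where "Y k = of_nat (k choose b) * y ^ (k - b)" for k
  have slice: "(\<Sum>e\<in>mons s (Suc D - k). c (e(s := k)) * (F e * Y k))
      = hasse s D (coeff_var c s k) a w * Y k" if "k \<le> D" for k
  proof -
    have "hasse s D (coeff_var c s k) a w * Y k = (\<Sum>e\<in>mons s (Suc D). c (e(s := k)) * (F e * Y k))"
      unfolding hasse_def F_def coeff_var_def sum_distrib_right
      by (intro sum.cong refl) (auto simp: mons_def mult_ac)
    also have "\<dots> = (\<Sum>e\<in>mons s (Suc D - k). c (e(s := k)) * (F e * Y k))"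
    proof (rule sum.mono_neutral_right[OF finite_mons])
      show "\<forall>e\<in>mons s (Suc D) - mons s (Suc D - k). c (e(s := k)) * (F e * Y k) = 0"
      proof
        fix e assume "e \<in> mons s (Suc D) - mons s (Suc D - k)"
        then have "e(s := k) \<notin> mons (Suc s) (Suc D)"
          using weight_fun_upd[of e s k] by (auto simp: mons_def)
        then show "c (e(s := k)) * (F e * Y k) = 0"
          using supp by simp
      qed
    qed (auto simp: mons_def)
    finally show ?thesis by simp
  qed
  have monomial: "(\<Prod>j<Suc s. of_nat ((e(s := k)) j choose (a(s := b)) j)
        * (w(s := y)) j ^ ((e(s := k)) j - (a(s := b)) j)) = F e * Y k" for e k
    unfolding F_def Y_def by (simp add: lessThan_Suc)
  have "hasse (Suc s) D c (a(s := b)) (w(s := y))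
     = (\<Sum>(k, e)\<in>(SIGMA k:{..<Suc D}. mons s (Suc D - k)). c (e(s := k)) * (F e * Y k))"
    unfolding hasse_def mons_Suc[of s]
    by (subst sum.reindex[OF inj_on_mons_Suc]) (simp add: case_prod_beta monomial del: fun_upd_apply prod.lessThan_Suc)
  also have "\<dots> = (\<Sum>k\<le>D. \<Sum>e\<in>mons s (Suc D - k). c (e(s := k)) * (F e * Y k))"
    by (subst sum.Sigma) (auto simp: finite_mons lessThan_Suc_atMost[symmetric])
  also have "\<dots> = (\<Sum>k\<le>D. hasse s D (coeff_var c s k) a w * Y k)"
    by (intro sum.cong refl) (simp add: slice)
  finally show ?thesis by (simp add: Y_def)
qed

section \<open>Roots with multiplicity of univariate polynomials\<close>

lemma sum_count_le_size:
  assumes "finite T"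
  shows "(\<Sum>t\<in>T. count P t) \<le> size P"
proof -
  have "(\<Sum>t\<in>T. count P t) = (\<Sum>t\<in>T \<inter> set_mset P. count P t)"
    using assms by (intro sum.mono_neutral_right) auto
  also have "\<dots> \<le> (\<Sum>t\<in>set_mset P. count P t)"
    by (intro sum_mono2) auto
  also have "\<dots> = size P"
    by (simp add: size_multiset_overloaded_eq)
  finally show ?thesis .
qed

lemma pcompose_power: "pcompose (p ^ n) r = pcompose p r ^ n"
  by (induction n) (simp_all add: pcompose_1 pcompose_mult)

lemma pcompose_X_power: "pcompose ([:0, 1:] ^ n) p = p ^ n"
  by (simp add: pcompose_power pcompose_pCons)

lemma order_ge_if_shifted_coeffs_vanish:
  fixes g :: "'a::field poly"
  assumes "g \<noteq> 0" and "\<forall>b<M. coeff (pcompose g [:t, 1:]) b = 0"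
  shows "M \<le> order t g"
proof -
  have "monom 1 M dvd pcompose g [:t, 1:]"
    using assms(2) by (simp add: monom_1_dvd_iff')
  then obtain k where k: "pcompose g [:t, 1:] = monom 1 M * k"
    by (auto simp: dvd_def)
  have "pcompose [:t, 1:] [:-t, 1:] = [:0, 1:]"
    by (simp add: pcompose_pCons)
  then have "g = pcompose (pcompose g [:t, 1:]) [:-t, 1:]"
    by (metis pcompose_assoc pcompose_idR)
  also have "\<dots> = [:-t, 1:] ^ M * pcompose k [:-t, 1:]"
    by (simp add: k pcompose_mult monom_altdef pcompose_X_power)
  finally have "[:-t, 1:] ^ M dvd g"
    by (metis dvd_triv_left)
  then show ?thesis
    using assms(1) by (simp add: order_divides)
qed

text \<open>Vanishing to order \<open>M\<close> at \<open>t\<close> is expressed through the Taylor coefficients at \<open>t\<close>.\<close>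

lemma poly_eq_0_if_vanishes_to_order:
  fixes g :: "'a::field poly"
  assumes "finite T" and "\<forall>t\<in>T. \<forall>b<M. coeff (pcompose g [:t, 1:]) b = 0"
    and "degree g < M * card T"
  shows "g = 0"
proof (rule ccontr)
  assume g: "g \<noteq> 0"
  have "M * card T = (\<Sum>t\<in>T. M)" by simp
  also have "\<dots> \<le> (\<Sum>t\<in>T. order t g)"
    using assms(2) by (intro sum_mono order_ge_if_shifted_coeffs_vanish[OF g]) auto
  also have "\<dots> = (\<Sum>t\<in>T. count (proots g) t)"
    using g by simp
  also have "\<dots> \<le> size (proots g)"
    using assms(1) by (rule sum_count_le_size)
  also have "\<dots> \<le> degree g"
    by (rule size_proots_le)
  finally show False
    using assms(3) by simp
qed

lemma coeff_pcompose_shift_sum_monom: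
  fixes h :: "nat \<Rightarrow> 'a::comm_ring_1"
  shows "coeff (pcompose (\<Sum>k\<le>D. monom (h k) k) [:y, 1:]) b
       = (\<Sum>k\<le>D. h k * (of_nat (k choose b) * y ^ (k - b)))"
proof -
  have "coeff ([:y, 1:] ^ k) b = of_nat (k choose b) * y ^ (k - b)" for k
  proof (cases "b \<le> k")
    case False
    then have "degree ([:y, 1:] ^ k) < b"
      using degree_power_le[of "[:y, 1:]" k] by auto
    then show ?thesis
      using False by (simp add: coeff_eq_0 binomial_eq_0)
  qed (simp add: coeff_linear_poly_power)
  then show ?thesis
    by (simp add: pcompose_sum monom_altdef pcompose_smult pcompose_X_power coeff_sum)
qed

section \<open>Vanishing to order \<open>M\<close> on a product grid\<close>

definition grid :: "(nat \<Rightarrow> 'a set) \<Rightarrow> nat \<Rightarrow> (nat \<Rightarrow> 'a::zero) set" where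
  "grid S s = {w. (\<forall>j<s. w j \<in> S j) \<and> (\<forall>j\<ge>s. w j = 0)}"

text \<open>Restricting the \<open>(a, b)\<close>-th Hasse derivatives at \<open>w(s := y)\<close>, \<open>b < M - |a|\<close>, to the line in
  direction \<open>x\<^sub>s\<close> gives the Taylor coefficients at \<open>y\<close> of a univariate polynomial of degree \<open>\<le> t\<close>
  whose leading coefficient is the \<open>a\<close>-th Hasse derivative of the top slice at \<open>w\<close>.\<close>

lemma hasse_top_coeff_var_vanish_on_grid:
  fixes c :: "(nat \<Rightarrow> nat) \<Rightarrow> 'a::field"
  assumes supp: "\<forall>e. e \<notin> mons (Suc s) (Suc D) \<longrightarrow> c e = 0"
    and top: "\<forall>k>t. coeff_var c s k = (\<lambda>_. 0)" and "t \<le> D"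
    and "0 < n" and "n \<le> card (S s)"
    and vanish: "\<forall>w\<in>grid S (Suc s). \<forall>i\<in>mons (Suc s) M. hasse (Suc s) D c i w = 0"
  shows "\<forall>w\<in>grid S s. \<forall>a\<in>mons s (M - t div n). hasse s D (coeff_var c s t) a w = 0"
proof (intro ballI)
  fix w a assume w: "w \<in> grid S s" and a: "a \<in> mons s (M - t div n)"
  define r where "r = (\<Sum>j<s. a j)"
  have r: "r + t div n < M"
    using a by (simp add: mons_def r_def less_diff_conv)
  define h where "h k = hasse s D (coeff_var c s k) a w" for k
  define g where "g = (\<Sum>k\<le>D. monom (h k) k)"
  have coeff_g: "coeff g k = (if k \<le> D then h k else 0)" for k
    unfolding g_def coeff_sum by simp
  have "degree g \<le> t"
    by (rule degree_le) (auto simp: coeff_g h_def top)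
  also have "t < t div n * n + n"
    using div_mult_mod_eq[of t n] mod_less_divisor[OF \<open>0 < n\<close>, of t] by linarith
  also have "\<dots> \<le> (M - r) * card (S s)"
    using r \<open>n \<le> card (S s)\<close>
    by (intro order_trans[OF _ mult_le_mono[of "t div n + 1" "M - r" n "card (S s)"]]) auto
  finally have deg: "degree g < (M - r) * card (S s)" .
  have "\<forall>y\<in>S s. \<forall>b<M - r. coeff (pcompose g [:y, 1:]) b = 0"
  proof (intro ballI allI impI)
    fix y b assume "y \<in> S s" and "b < M - r"
    then have "w(s := y) \<in> grid S (Suc s)" and "a(s := b) \<in> mons (Suc s) M"
      using w a by (auto simp: grid_def mons_def r_def less_Suc_eq)
    then have "hasse (Suc s) D c (a(s := b)) (w(s := y)) = 0"
      using vanish by blast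
    then show "coeff (pcompose g [:y, 1:]) b = 0"
      unfolding g_def coeff_pcompose_shift_sum_monom hasse_Suc_fun_upd[OF supp] h_def .
  qed
  moreover have "finite (S s)"
    using \<open>0 < n\<close> \<open>n \<le> card (S s)\<close> by (metis card.infinite not_less le_0_eq)
  ultimately have "g = 0"
    using deg poly_eq_0_if_vanishes_to_order by blast
  then show "hasse s D (coeff_var c s t) a w = 0"
    using coeff_g[of t] \<open>t \<le> D\<close> by (simp add: h_def)
qed

lemma coeffs_eq_0_if_hasse_vanish_on_grid:
  fixes c :: "(nat \<Rightarrow> nat) \<Rightarrow> 'a::field"
  assumes "\<forall>j<s. n \<le> card (S j)" and "D < M * n"
    and "\<forall>e. e \<notin> mons s (Suc D) \<longrightarrow> c e = 0"
    and "\<forall>w\<in>grid S s. \<forall>i\<in>mons s M. hasse s D c i w = 0"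
  shows "c = (\<lambda>_. 0)"
  using assms
proof (induction s arbitrary: M D c)
  case 0
  then have "0 < M"
    by (cases M) auto
  then have "(\<lambda>_. 0) \<in> mons 0 M" "(\<lambda>_. 0) \<in> grid S 0"
    by (auto simp: mons_def grid_def)
  then have "hasse 0 D c (\<lambda>_. 0) (\<lambda>_. 0) = 0"
    using "0.prems"(4) by blast
  then have "c (\<lambda>_. 0) = 0"
    by (simp add: hasse_def mons_0)
  show ?case
  proof (rule ext)
    fix e
    show "c e = 0"
    proof (cases "e = (\<lambda>_. 0)")
      case False
      then show ?thesis
        using "0.prems"(3) by (auto simp: mons_0)
    qed (use \<open>c (\<lambda>_. 0) = 0\<close> in simp)
  qed
next
  case (Suc s)
  note supp = Suc.prems(3)
  have n: "0 < n"
    using Suc.prems(2) by (cases n) auto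
  show ?case
  proof (rule ccontr)
    assume "c \<noteq> (\<lambda>_. 0)"
    then obtain t where "t \<le> D" and "coeff_var c s t \<noteq> (\<lambda>_. 0)"
      and top: "\<forall>k>t. coeff_var c s k = (\<lambda>_. 0)"
      using ex_top_coeff_var[OF supp] by blast
    moreover have "coeff_var c s t = (\<lambda>_. 0)"
    proof (rule Suc.IH)
      show "\<forall>j<s. n \<le> card (S j)"
        using Suc.prems(1) by simp
      have "t div n * n \<le> t"
        by simp
      then show "D - t < (M - t div n) * n"
        using Suc.prems(2) \<open>t \<le> D\<close> unfolding diff_mult_distrib by linarith
      show "\<forall>e. e \<notin> mons s (Suc (D - t)) \<longrightarrow> coeff_var c s t e = 0"
        by (rule coeff_var_support[OF supp])
      show "\<forall>w\<in>grid S s. \<forall>i\<in>mons s (M - t div n). hasse s (D - t) (coeff_var c s t) i w = 0"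
        using hasse_top_coeff_var_vanish_on_grid[OF supp top \<open>t \<le> D\<close> n _ Suc.prems(4)]
          hasse_degree_mono[OF coeff_var_support[OF supp, of t] diff_le_self] Suc.prems(1)
        by simp
    qed
    ultimately show False
      by simp
  qed
qed

section \<open>Restriction to lines\<close>

definition line_poly :: "nat \<Rightarrow> nat \<Rightarrow> ((nat \<Rightarrow> nat) \<Rightarrow> 'a::comm_ring_1) \<Rightarrow> (nat \<Rightarrow> 'a) \<Rightarrow> (nat \<Rightarrow> 'a)
    \<Rightarrow> 'a poly" where
  "line_poly s D c u v = (\<Sum>e\<in>mons s (Suc D). smult (c e) (\<Prod>j<s. [:u j, v j:] ^ e j))"

lemma hasse_const_poly: "hasse s D (\<lambda>e. [:c e:]) a (\<lambda>j. [:u j:]) = [:hasse s D c a u:]"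
  unfolding hasse_def by (simp add: of_nat_poly poly_const_pow prod_to_poly sum_to_poly mult_ac)

lemma prod_power_linear_monom:
  fixes s :: nat
  shows "(\<Prod>j<s. [:0, v j:] ^ a j) = monom (\<Prod>j<s. v j ^ a j) (\<Sum>j<s. a j)"
proof (induction s)
  case 0
  then show ?case by (simp add: one_pCons monom_0)
next
  case (Suc s)
  have "[:0, v s:] = monom (v s) 1"
    by (simp add: monom_Suc monom_0)
  then show ?case
    using Suc by (simp add: monom_power mult_monom mult_ac add.commute)
qed

lemma coeff_line_poly:
  "coeff (line_poly s D c u v) b
     = (\<Sum>a\<in>{a\<in>mons s (Suc D). (\<Sum>j<s. a j) = b}. hasse s D c a u * (\<Prod>j<s. v j ^ a j))"
proof -
  have "line_poly s D c u v = (\<Sum>e\<in>mons s (Suc D). [:c e:] * (\<Prod>j<s. ([:u j:] + [:0, v j:]) ^ e j))"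
    unfolding line_poly_def by (intro sum.cong refl) simp
  also have "\<dots> = (\<Sum>a\<in>mons s (Suc D). [:hasse s D c a u:] * (\<Prod>j<s. [:0, v j:] ^ a j))"
    by (subst hasse_taylor) (simp add: hasse_const_poly)
  also have "\<dots> = (\<Sum>a\<in>mons s (Suc D). monom (hasse s D c a u * (\<Prod>j<s. v j ^ a j)) (\<Sum>j<s. a j))"
    by (simp add: prod_power_linear_monom smult_monom)
  finally show ?thesis
    by (simp add: coeff_sum sum.inter_filter[OF finite_mons] eq_commute)
qed

lemma pcompose_line_poly: "pcompose (line_poly s D c u v) [:t, 1:] = line_poly s D c (\<lambda>j. u j + t * v j) v"
proof -
  have "pcompose [:u j, v j:] [:t, 1:] = [:u j + t * v j, v j:]" for j
    by (simp add: pcompose_pCons algebra_simps)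
  then show ?thesis
    unfolding line_poly_def by (simp add: pcompose_sum pcompose_smult pcompose_prod pcompose_power)
qed

lemma degree_line_poly: "degree (line_poly s D c u v) \<le> D"
  unfolding line_poly_def
proof (rule degree_sum_le[OF finite_mons])
  fix e assume e: "e \<in> mons s (Suc D)"
  have "degree (\<Prod>j<s. [:u j, v j:] ^ e j) \<le> (\<Sum>j<s. degree ([:u j, v j:] ^ e j))"
    using degree_prod_sum_le[of "{..<s}" "\<lambda>j. [:u j, v j:] ^ e j"] by (simp add: o_def)
  also have "\<dots> \<le> (\<Sum>j<s. e j)"
    by (intro sum_mono order_trans[OF degree_power_le]) simp
  also have "\<dots> \<le> D"
    using e by (simp add: mons_def)
  finally show "degree (smult (c e) (\<Prod>j<s. [:u j, v j:] ^ e j)) \<le> D"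
    using degree_smult_le order_trans by blast
qed

lemma directional_hasse_eq_0_if_vanish_on_line:
  fixes c :: "(nat \<Rightarrow> nat) \<Rightarrow> 'a::{finite,field}"
  assumes "D < M * (CARD('a) - 1)"
    and vanish: "\<forall>t. t \<noteq> 0 \<longrightarrow> (\<forall>i\<in>mons s M. hasse s D c i (\<lambda>j. w j + t * v j) = 0)"
  shows "(\<Sum>a\<in>{a\<in>mons s (Suc D). (\<Sum>j<s. a j) = b}. hasse s D c a w * (\<Prod>j<s. v j ^ a j)) = 0"
proof -
  have "line_poly s D c w v = 0"
  proof (rule poly_eq_0_if_vanishes_to_order)
    show "degree (line_poly s D c w v) < M * card (UNIV - {0::'a})"
      using degree_line_poly[of s D c w v] assms(1) by (simp add: card_Diff_singleton)
    show "\<forall>t\<in>UNIV - {0}. \<forall>b<M. coeff (pcompose (line_poly s D c w v) [:t, 1:]) b = 0"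
      unfolding pcompose_line_poly coeff_line_poly
      using vanish by (auto intro!: sum.neutral simp: mons_def)
  qed simp
  then show ?thesis
    using coeff_line_poly[of s D c w v b] by simp
qed

section \<open>Local recovery from punctured lines\<close>

definition punctured_lines :: "(nat \<Rightarrow> 'a set) \<Rightarrow> nat \<Rightarrow> (nat \<Rightarrow> 'a) \<Rightarrow> (nat \<Rightarrow> 'a::comm_ring_1) set" where
  "punctured_lines S s w = {(\<lambda>j. w j + t * (v(s := 1)) j) | v t. v \<in> grid S s \<and> t \<noteq> 0}"

text \<open>A multi-index of weight \<open>b\<close> in \<open>s + 1\<close> variables is determined by its first \<open>s\<close> entries.\<close>

definition complete_weight :: "nat \<Rightarrow> nat \<Rightarrow> (nat \<Rightarrow> nat) \<Rightarrow> (nat \<Rightarrow> nat)" where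
  "complete_weight s b e = e(s := b - (\<Sum>j<s. e j))"

lemma bij_betw_complete_weight:
  assumes "b \<le> D"
  shows "bij_betw (complete_weight s b) (mons s (Suc b))
           {a\<in>mons (Suc s) (Suc D). (\<Sum>j<Suc s. a j) = b}"
proof (rule bij_betwI[where g = "\<lambda>a. a(s := 0)"])
  show "complete_weight s b \<in> mons s (Suc b) \<rightarrow> {a\<in>mons (Suc s) (Suc D). (\<Sum>j<Suc s. a j) = b}"
    using assms by (auto simp: complete_weight_def mons_def)
  show "(\<lambda>a. a(s := 0)) \<in> {a\<in>mons (Suc s) (Suc D). (\<Sum>j<Suc s. a j) = b} \<rightarrow> mons s (Suc b)"
    using weight_fun_upd[of _ s 0] by (auto simp: mons_def)
  show "(complete_weight s b e)(s := 0) = e" if "e \<in> mons s (Suc b)" for e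
    using that by (auto simp: complete_weight_def mons_def fun_eq_iff)
  show "complete_weight s b (a(s := 0)) = a"
    if "a \<in> {a\<in>mons (Suc s) (Suc D). (\<Sum>j<Suc s. a j) = b}" for a
    using that by (auto simp: complete_weight_def fun_eq_iff)
qed

text \<open>The polynomial \<open>h\<close> below is the weight-\<open>b\<close> Taylor term of \<open>P\<close> at \<open>w\<close>, with the last
  coordinate of the direction set to \<open>1\<close>.\<close>

lemma hasse_vanish_if_vanish_on_punctured_lines:
  fixes c :: "(nat \<Rightarrow> nat) \<Rightarrow> 'a::{finite,field}"
  assumes dm: "d < m * (CARD('a) - 1)" and S: "\<forall>j<s. m \<le> card (S j)"
    and vanish: "\<forall>u\<in>punctured_lines S s w. \<forall>i\<in>mons (Suc s) m. hasse (Suc s) d c i u = 0"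
  shows "\<forall>i\<in>mons (Suc s) m. hasse (Suc s) d c i w = 0"
proof
  fix i assume i: "i \<in> mons (Suc s) m"
  define b where "b = (\<Sum>j<Suc s. i j)"
  show "hasse (Suc s) d c i w = 0"
  proof (cases "d < b")
    case True
    then show ?thesis by (simp add: b_def hasse_eq_0_if_weight_gt)
  next
    case False
    then have "b \<le> d" by simp
    define h where
      "h e = (if e \<in> mons s (Suc b) then hasse (Suc s) d c (complete_weight s b e) w else 0)" for e
    have "h = (\<lambda>_. 0)"
    proof (rule coeffs_eq_0_if_hasse_vanish_on_grid[OF S])
      show "b < 1 * m"
        using i by (simp add: b_def mons_def)
      show "\<forall>e. e \<notin> mons s (Suc b) \<longrightarrow> h e = 0"
        by (simp add: h_def)
      show "\<forall>v\<in>grid S s. \<forall>i'\<in>mons s 1. hasse s b h i' v = 0"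
      proof (intro ballI)
        fix v :: "nat \<Rightarrow> 'a" and i' assume v: "v \<in> grid S s" and "i' \<in> mons s 1"
        then have "i' = (\<lambda>_. 0)"
          by (auto simp: mons_def fun_eq_iff) (metis leI lessThan_iff)
        then have "hasse s b h i' v = (\<Sum>e\<in>mons s (Suc b). h e * (\<Prod>j<s. v j ^ e j))"
          by (simp add: hasse_def)
        also have "\<dots> = (\<Sum>e\<in>mons s (Suc b). hasse (Suc s) d c (complete_weight s b e) w
            * (\<Prod>j<Suc s. (v(s := 1)) j ^ complete_weight s b e j))"
          by (intro sum.cong refl) (simp add: h_def complete_weight_def)
        also have "\<dots> = (\<Sum>a\<in>{a\<in>mons (Suc s) (Suc d). (\<Sum>j<Suc s. a j) = b}.
            hasse (Suc s) d c a w * (\<Prod>j<Suc s. (v(s := 1)) j ^ a j))"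
          by (rule sum.reindex_bij_betw[OF bij_betw_complete_weight[OF \<open>b \<le> d\<close>]])
        also have "\<dots> = 0"
          using vanish v by (intro directional_hasse_eq_0_if_vanish_on_line[OF dm])
            (auto simp: punctured_lines_def)
        finally show "hasse s b h i' v = 0" .
      qed
    qed
    moreover have "i(s := 0) \<in> mons s (Suc b)" and "complete_weight s b (i(s := 0)) = i"
      using i by (auto simp: b_def mons_def complete_weight_def fun_eq_iff)
    ultimately show ?thesis
      unfolding h_def by (metis (no_types, lifting))
  qed
qed

section \<open>The multiplicity code\<close>

lemma less_mult_diff_1_if_divide_less:
  assumes "0 < m" and "real d / real m < real q - 1"
  shows "d < m * (q - 1)"
proof -
  have "real d < (real q - 1) * real m"
    using assms by (simp add: pos_divide_less_eq)
  moreover have "q \<noteq> 0"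
    using calculation by (cases "q = 0") auto
  ultimately have "real d < real ((q - 1) * m)"
    by simp
  then show ?thesis
    by (simp only: of_nat_less_iff mult.commute)
qed

lemma card_alphabet:
  assumes "0 < m"
  shows "card (alphabet s m :: ((nat \<Rightarrow> nat) \<Rightarrow> 'a::finite) set) = CARD('a) ^ (s + m - 1 choose s)"
  using assms card_mons[of s "m - 1"] by (simp add: alphabet_def card_PiE finite_mons)

lemma mult_codeword_eq_iff:
  assumes "u \<in> pts s"
  shows "mult_codeword m d s c1 u = mult_codeword m d s c2 u
    \<longleftrightarrow> (\<forall>i\<in>mons s m. hasse s d (\<lambda>e. c1 e - c2 e) i u = 0)"
  using assms by (auto simp: mult_codeword_def hasse_diff restrict_def fun_eq_iff)

lemma inj_on_mult_codeword:
  assumes "d < m * CARD('a::{finite,field})"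
  shows "inj_on (mult_codeword m d s :: _ \<Rightarrow> (nat \<Rightarrow> 'a) \<Rightarrow> _) (polys s d)"
proof (rule inj_onI)
  fix c1 c2 :: "(nat \<Rightarrow> nat) \<Rightarrow> 'a"
  assume "c1 \<in> polys s d" "c2 \<in> polys s d" and eq: "mult_codeword m d s c1 = mult_codeword m d s c2"
  have "(\<lambda>e. c1 e - c2 e) = (\<lambda>_. 0)"
  proof (rule coeffs_eq_0_if_hasse_vanish_on_grid[where S = "\<lambda>_. UNIV" and n = "CARD('a)"])
    show "\<forall>w\<in>grid (\<lambda>_. UNIV) s. \<forall>i\<in>mons s m. hasse s d (\<lambda>e. c1 e - c2 e) i w = 0"
    proof (rule ballI)
      fix w :: "nat \<Rightarrow> 'a" assume "w \<in> grid (\<lambda>_. UNIV) s"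
      then have "w \<in> pts s"
        by (simp add: grid_def pts_def)
      then show "\<forall>i\<in>mons s m. hasse s d (\<lambda>e. c1 e - c2 e) i w = 0"
        using eq mult_codeword_eq_iff by metis
    qed
  qed (use assms \<open>c1 \<in> polys s d\<close> \<open>c2 \<in> polys s d\<close> in \<open>auto simp: polys_def\<close>)
  then show "c1 = c2"
    by (auto simp: fun_eq_iff dest: fun_cong)
qed

lemma card_mult_code:
  assumes "d < m * CARD('a::{finite,field})"
  shows "card (mult_code m d s :: ((nat \<Rightarrow> 'a) \<Rightarrow> _) set) = CARD('a) ^ (d + s choose s)"
proof -
  have "card (mult_code m d s :: ((nat \<Rightarrow> 'a) \<Rightarrow> _) set) = card (polys s d :: (_ \<Rightarrow> 'a) set)"
    unfolding mult_code_def using inj_on_mult_codeword[OF assms] by (rule card_image)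
  also have "\<dots> = CARD('a) ^ (d + s choose s)"
    unfolding polys_def by (simp add: card_supported_functions finite_mons card_mons add.commute)
  finally show ?thesis .
qed

lemma mult_code_recover_from_punctured_lines:
  fixes c1 c2 :: "(nat \<Rightarrow> 'a::{finite,field}) \<Rightarrow> (nat \<Rightarrow> nat) \<Rightarrow> 'a"
  assumes "d < m * (CARD('a) - 1)" and "\<forall>j<s. m \<le> card (S j)" and "w \<in> pts (Suc s)"
    and "c1 \<in> mult_code m d (Suc s)" "c2 \<in> mult_code m d (Suc s)"
    and agree: "\<forall>u\<in>punctured_lines S s w. c1 u = c2 u"
  shows "c1 w = c2 w"
proof -
  obtain P1 P2 where P: "c1 = mult_codeword m d (Suc s) P1" "c2 = mult_codeword m d (Suc s) P2"
    using assms(4,5) by (auto simp: mult_code_def)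
  have "punctured_lines S s w \<subseteq> pts (Suc s)"
    using assms(3) by (auto simp: punctured_lines_def pts_def grid_def)
  then have "\<forall>u\<in>punctured_lines S s w. \<forall>i\<in>mons (Suc s) m.
      hasse (Suc s) d (\<lambda>e. P1 e - P2 e) i u = 0"
    using agree mult_codeword_eq_iff unfolding P by blast
  then show ?thesis
    using hasse_vanish_if_vanish_on_punctured_lines[OF assms(1,2)] mult_codeword_eq_iff[OF assms(3)]
    unfolding P by blast
qed

lemma punctured_lines_subset_pts:
  assumes "w \<in> pts (Suc s)"
  shows "punctured_lines S s w \<subseteq> pts (Suc s)"
  using assms by (auto simp: punctured_lines_def pts_def grid_def)

lemma punctured_lines_disjoint:
  fixes w :: "nat \<Rightarrow> 'a::field"
  assumes "j < s" and "S j \<inter> S' j = {}"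
  shows "punctured_lines S s w \<inter> punctured_lines S' s w = {}"
proof (rule ccontr)
  assume "punctured_lines S s w \<inter> punctured_lines S' s w \<noteq> {}"
  then obtain v v' :: "nat \<Rightarrow> 'a" and t t' where
    "v \<in> grid S s" "v' \<in> grid S' s" "t \<noteq> 0" "t' \<noteq> 0"
    and eq: "(\<lambda>i. w i + t * (v(s := 1)) i) = (\<lambda>i. w i + t' * (v'(s := 1)) i)"
    unfolding punctured_lines_def by blast
  moreover have "t = t'"
    using fun_cong[OF eq, of s] by simp
  ultimately have "v j = v' j"
    using fun_cong[OF eq, of j] \<open>j < s\<close> by simp
  then show False
    using \<open>v \<in> grid S s\<close> \<open>v' \<in> grid S' s\<close> assms by (auto simp: grid_def)
qed

lemma ex_disjoint_blocks:
  assumes "n * m \<le> CARD('a::finite)"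
  shows "\<exists>B :: nat \<Rightarrow> 'a set. (\<forall>l<n. card (B l) = m) \<and> (\<forall>l<n. \<forall>l'<n. l \<noteq> l' \<longrightarrow> B l \<inter> B l' = {})"
proof -
  obtain f :: "nat \<Rightarrow> 'a" where f: "bij_betw f {0..<CARD('a)} UNIV"
    using ex_bij_betw_nat_finite[of "UNIV :: 'a set"] by auto
  have block: "{l * m..<l * m + m} \<subseteq> {0..<CARD('a)}" if "l < n" for l
  proof -
    have "Suc l * m \<le> n * m"
      using that by (intro mult_le_mono1) simp
    then show ?thesis
      using assms by auto
  qed
  have inj: "inj_on f {0..<CARD('a)}"
    using f by (simp add: bij_betw_def)
  have "card (f ` {l * m..<l * m + m}) = m" if "l < n" for l
    using card_image[OF inj_on_subset[OF inj block[OF that]]] by simp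
  moreover have "f ` {l * m..<l * m + m} \<inter> f ` {l' * m..<l' * m + m} = {}"
    if "l < n" "l' < n" "l \<noteq> l'" for l l'
  proof -
    have "a div m = l" if "a \<in> {l * m..<l * m + m}" for a l
      using that by (auto intro: div_nat_eqI simp: mult.commute)
    then have "{l * m..<l * m + m} \<inter> {l' * m..<l' * m + m} = {}"
      using \<open>l \<noteq> l'\<close> by blast
    then show ?thesis
      using inj_on_image_Int[OF inj block[OF that(1)] block[OF that(2)]] by (metis image_empty)
  qed
  ultimately show ?thesis
    by (intro exI[of _ "\<lambda>l. f ` {l * m..<l * m + m}"]) blast
qed

lemma pir_recoverable_if_disjoint_family:
  assumes "finite L" and "card L = k"
    and "\<forall>l\<in>L. R l \<subseteq> I" and "\<forall>l\<in>L. \<forall>l'\<in>L. l \<noteq> l' \<longrightarrow> R l \<inter> R l' = {}"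
    and "\<forall>l\<in>L. \<forall>c1\<in>C. \<forall>c2\<in>C. (\<forall>y\<in>R l. c1 y = c2 y) \<longrightarrow> c1 w = c2 w"
  shows "pir_recoverable I C k w"
proof -
  obtain g where g: "bij_betw g {0..<k} L"
    using ex_bij_betw_nat_finite[OF assms(1)] assms(2) by blast
  have "g j \<in> L" if "j < k" for j
    using g that by (auto simp: bij_betw_def)
  moreover have "g j \<noteq> g j'" if "j < k" "j' < k" "j \<noteq> j'" for j j'
    using g that by (auto simp: bij_betw_def inj_on_def)
  ultimately show ?thesis
    unfolding pir_recoverable_def using assms(3-5)
    by (intro exI[of _ "R \<circ> g"]) (simp; meson)
qed

lemma mult_code_pir_recoverable:
  assumes "d < m * (CARD('a::{finite,field}) - 1)" and "0 < s" and "w \<in> pts s"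
  shows "pir_recoverable (pts s) (mult_code m d s :: ((nat \<Rightarrow> 'a) \<Rightarrow> _) set)
           ((CARD('a) div m) ^ (s - 1)) w"
proof -
  obtain s' where s: "s = Suc s'"
    using \<open>0 < s\<close> by (cases s) auto
  define n where "n = CARD('a) div m"
  obtain B :: "nat \<Rightarrow> 'a set" where card_B: "\<forall>l<n. card (B l) = m"
    and disjoint_B: "\<forall>l<n. \<forall>l'<n. l \<noteq> l' \<longrightarrow> B l \<inter> B l' = {}"
    using ex_disjoint_blocks[where 'a = 'a, of n m] by (auto simp: n_def)
  define L where "L = PiE {..<s'} (\<lambda>_. {..<n})"
  show ?thesis
    unfolding s diff_Suc_1 n_def[symmetric]
  proof (rule pir_recoverable_if_disjoint_family[where L = L
        and R = "\<lambda>l. punctured_lines (\<lambda>j. B (l j)) s' w"])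
    show "finite L" and "card L = n ^ s'"
      by (simp_all add: L_def finite_PiE card_PiE)
    show "\<forall>l\<in>L. punctured_lines (\<lambda>j. B (l j)) s' w \<subseteq> pts (Suc s')"
      using punctured_lines_subset_pts assms(3) s by blast
    show "\<forall>l\<in>L. \<forall>l'\<in>L. l \<noteq> l' \<longrightarrow>
        punctured_lines (\<lambda>j. B (l j)) s' w \<inter> punctured_lines (\<lambda>j. B (l' j)) s' w = {}"
    proof (intro ballI impI)
      fix l l' assume "l \<in> L" "l' \<in> L" "l \<noteq> l'"
      then obtain j where "j < s'" "l j \<noteq> l' j"
        unfolding L_def using PiE_ext by blast
      moreover have "l j < n" "l' j < n"
        using \<open>l \<in> L\<close> \<open>l' \<in> L\<close> \<open>j < s'\<close> by (auto simp: L_def)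
      ultimately show "punctured_lines (\<lambda>j. B (l j)) s' w \<inter> punctured_lines (\<lambda>j. B (l' j)) s' w = {}"
        using disjoint_B by (intro punctured_lines_disjoint) auto
    qed
    show "\<forall>l\<in>L. \<forall>c1\<in>mult_code m d (Suc s'). \<forall>c2\<in>mult_code m d (Suc s').
        (\<forall>y\<in>punctured_lines (\<lambda>j. B (l j)) s' w. c1 y = c2 y) \<longrightarrow> c1 w = c2 w"
    proof (intro ballI impI)
      fix l c1 c2 assume "l \<in> L" and c: "c1 \<in> mult_code m d (Suc s')" "c2 \<in> mult_code m d (Suc s')"
        and agree: "\<forall>y\<in>punctured_lines (\<lambda>j. B (l j)) s' w. c1 y = c2 y"
      have "\<forall>j<s'. m \<le> card (B (l j))"
        using \<open>l \<in> L\<close> card_B by (auto simp: L_def)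
      then show "c1 w = c2 w"
        using mult_code_recover_from_punctured_lines[OF assms(1) _ _ c agree] assms(3) s by blast
    qed
  qed
qed

theorem theorem2:
  fixes m d s :: nat
  assumes "m > 0" and "d > 0" and "s > 0"
    and "real d / real m < real CARD('a::{finite,field}) - 1"
  shows "card (pts s :: (nat \<Rightarrow> 'a) set) = CARD('a) ^ s
     \<and> card (alphabet s m :: ((nat \<Rightarrow> nat) \<Rightarrow> 'a) set) = CARD('a) ^ (s + m - 1 choose s)
     \<and> mult_code m d s \<subseteq> PiE (pts s) (\<lambda>_. alphabet s m :: ((nat \<Rightarrow> nat) \<Rightarrow> 'a) set)
     \<and> card (mult_code m d s :: ((nat \<Rightarrow> 'a) \<Rightarrow> ((nat \<Rightarrow> nat) \<Rightarrow> 'a)) set)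
         = CARD('a) ^ (d + s choose s)
     \<and> (\<forall>w \<in> pts s. pir_recoverable (pts s) (mult_code m d s :: ((nat \<Rightarrow> 'a) \<Rightarrow> ((nat \<Rightarrow> nat) \<Rightarrow> 'a)) set)
                       ((CARD('a) div m) ^ (s - 1)) w)"
proof -
  have d_less: "d < m * (CARD('a) - 1)"
    using less_mult_diff_1_if_divide_less[OF assms(1,4)] .
  then have "d < m * CARD('a)"
    using diff_le_self mult_le_mono2 order_less_le_trans by metis
  moreover have "mult_code m d s \<subseteq> PiE (pts s) (\<lambda>_. alphabet s m :: ((nat \<Rightarrow> nat) \<Rightarrow> 'a) set)"
    by (auto simp: mult_code_def mult_codeword_def alphabet_def)
  ultimately show ?thesis
    using card_pts card_alphabet[OF assms(1)] card_mult_code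
      mult_code_pir_recoverable[OF d_less assms(3)]
    by blast
qed

end
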